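(* Let $n\ge 1$, $\nu>0$, and let $\alpha_u,\alpha_y\ge 0$ with $\max\{\alpha_u,\alpha_y\}>0$. Let $M\in\mathbb{R}^{n\times n}$ be diagonal with positive diagonal entries, let $L\in\mathbb{R}^{n\times n}$ with $L+L^T$ positive semidefinite, and let $\Pi_k$ be an $n\times n$ diagonal matrix with diagonal entries in $\{0,1\}$. Set $\gamma_1=\frac{\alpha_y^2\nu}{\alpha_y^2\nu+\alpha_u^2}$, $\gamma_2=\frac{\alpha_u^2}{\alpha_y^2\nu+\alpha_u^2}$, and assume $\gamma_1=\gamma_2=\tfrac12$. Define $$\mathbb{S}_k=\nu LM^{-1}L^T+M-\frac{1}{\alpha_y^2\nu+\alpha_u^2}(\alpha_y\nu LM^{-1}-\alpha_u I)\Pi_k M\Pi_k(\alpha_y\nu LM^{-1}-\alpha_u I)^T,$$ $L_1=\sqrt{\nu}L(I-\gamma_1\Pi_k)^{1/2}+(I-\gamma_2\Pi_k)^{1/2}M$ and $\widehat{\mathbb{S}}_k=L_1M^{-1}L_1^T$. Then every eigenvalue $\lambda$ of the pencil $(\mathbb{S}_k,\widehat{\mathbb{S}}_k)$ (i.e. $\mathbb{S}_kx=\lambda\widehat{\mathbb{S}}_kx$ for some $x\ne0$) satisfies $\lambda\in\left[\tfrac12,\,3\right]$.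
   Context: Square roots of nonnegative diagonal matrices are taken entrywise. *)

theory Defs
  imports "HOL-Analysis.Analysis"
begin

definition diagonal_mat :: "real^'n^'n \<Rightarrow> bool" where
  "diagonal_mat A \<longleftrightarrow> (\<forall>i j. i \<noteq> j \<longrightarrow> A $ i $ j = 0)"

definition psd_mat :: "real^'n^'n \<Rightarrow> bool" where
  "psd_mat A \<longleftrightarrow> (\<forall>x. 0 \<le> x \<bullet> (A *v x))"

definition diag_sqrt :: "real^'n^'n \<Rightarrow> real^'n^'n" where
  "diag_sqrt A = (\<chi> i j. if i = j then sqrt (A $ i $ i) else 0)"

end

theory Submission
  imports Defs
begin

text \<open>
  With \<open>a = \<surd>\<nu> L\<^sup>T x\<close> and \<open>b = M x\<close>, both quadratic forms diagonalise once
  \<open>\<gamma>\<^sub>1 = \<gamma>\<^sub>2 = 1/2\<close> (which forces \<open>\<alpha>\<^sub>y \<surd>\<nu> = \<alpha>\<^sub>u\<close>):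
  \<open>x\<^sup>T S x = \<Sum>\<^sub>i (a\<^sub>i\<^sup>2 + b\<^sub>i\<^sup>2 - p\<^sub>i (a\<^sub>i - b\<^sub>i)\<^sup>2 / 2) / \<mu>\<^sub>i\<close> and
  \<open>x\<^sup>T Shat x = \<Sum>\<^sub>i (1 - p\<^sub>i / 2) (a\<^sub>i + b\<^sub>i)\<^sup>2 / \<mu>\<^sub>i\<close>.
  For \<open>p\<^sub>i \<in> {0, 1}\<close> completing squares bounds each summand of the second form by twice the
  corresponding summand of the first, and each summand of the first plus \<open>4 a\<^sub>i b\<^sub>i / \<mu>\<^sub>i\<close> by
  three times that of the second. As \<open>\<Sum>\<^sub>i a\<^sub>i b\<^sub>i / \<mu>\<^sub>i = \<surd>\<nu> x\<^sup>T L x \<ge> 0\<close>, the Rayleigh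
  quotient \<open>x\<^sup>T S x / x\<^sup>T Shat x\<close>, which equals the eigenvalue, lies in \<open>[1/2, 3]\<close>.
\<close>

lemma transpose_add: "transpose (A + B) = transpose A + transpose (B :: 'a::semiring_1^'n^'m)"
  by (simp add: transpose_def vec_eq_iff)

lemma transpose_diff: "transpose (A - B) = transpose A - transpose (B :: 'a::ring_1^'n^'m)"
  by (simp add: transpose_def vec_eq_iff)

lemma diagonal_matD: "diagonal_mat D \<Longrightarrow> i \<noteq> j \<Longrightarrow> D $ i $ j = 0"
  unfolding diagonal_mat_def by blast

lemma diagonal_mat_vec_lambda: "diagonal_mat (\<chi> i j. if i = j then f i else 0)"
  unfolding diagonal_mat_def by simp

lemma diagonal_matrix_vector_mult:
  assumes "diagonal_mat D"
  shows "(D *v y) $ i = D $ i $ i * y $ i"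
proof -
  have "(D *v y) $ i = (\<Sum>j\<in>UNIV. if j = i then D $ i $ i * y $ i else 0)"
    unfolding matrix_vector_mult_def vec_lambda_beta
    by (rule sum.cong) (auto simp: diagonal_matD[OF assms])
  then show ?thesis by simp
qed

lemma diagonal_mat_transpose:
  assumes "diagonal_mat D"
  shows "transpose D = D"
  unfolding transpose_def vec_eq_iff
  by (metis assms diagonal_matD vec_lambda_beta)

lemma diagonal_mat_mult:
  assumes "diagonal_mat D" "diagonal_mat E"
  shows "D ** E = (\<chi> i j. if i = j then D $ i $ i * E $ i $ i else 0)"
proof -
  have "(D ** E) $ i $ j = (\<Sum>k\<in>UNIV. if k = i then (if i = j then D $ i $ i * E $ i $ i else 0) else 0)"
    for i j
    unfolding matrix_matrix_mult_def vec_lambda_beta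
    by (rule sum.cong) (auto simp: diagonal_matD[OF assms(1)] diagonal_matD[OF assms(2)])
  then show ?thesis by (simp add: vec_eq_iff)
qed

lemma matrix_inv_diagonal:
  assumes "diagonal_mat M" "\<forall>i. M $ i $ i \<noteq> 0"
  shows "matrix_inv M = (\<chi> i j. if i = j then 1 / M $ i $ i else 0)" (is "_ = ?N")
proof -
  have "M ** ?N = mat 1" "?N ** M = mat 1"
    using assms by (simp_all add: diagonal_mat_mult diagonal_mat_vec_lambda mat_def vec_eq_iff)
  then have inv: "M ** matrix_inv M = mat 1"
    unfolding matrix_inv_def by (rule someI[of _ ?N, OF conjI, THEN conjunct1])
  have "matrix_inv M = (?N ** M) ** matrix_inv M"
    using \<open>?N ** M = mat 1\<close> by simp
  also have "\<dots> = ?N"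
    by (simp only: matrix_mul_assoc[symmetric] inv matrix_mul_rid)
  finally show ?thesis .
qed

lemma diagonal_mat_diag_sqrt: "diagonal_mat (diag_sqrt A)"
  unfolding diag_sqrt_def by (rule diagonal_mat_vec_lambda)

lemma diag_sqrt_diag: "diag_sqrt A $ i $ i = sqrt (A $ i $ i)"
  unfolding diag_sqrt_def by simp

lemma inner_diagonal_mat:
  "diagonal_mat D \<Longrightarrow> y \<bullet> (D *v y) = (\<Sum>i\<in>UNIV. D $ i $ i * (y $ i)\<^sup>2)"
  by (simp add: inner_vec_def diagonal_matrix_vector_mult power2_eq_square mult_ac)

lemma inner_congruence:
  fixes A B :: "real^'n^'n"
  shows "x \<bullet> ((A ** B ** transpose A) *v x) = (transpose A *v x) \<bullet> (B *v (transpose A *v x))"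
proof -
  have "x \<bullet> (A *v y) = (transpose A *v x) \<bullet> y" for y
    by (simp add: dot_lmul_matrix)
  then show ?thesis
    by (simp only: matrix_vector_mul_assoc[symmetric])
qed

lemma psd_mat_add_transposeD:
  assumes "psd_mat (L + transpose L)"
  shows "0 \<le> x \<bullet> (L *v x)"
proof -
  have "x \<bullet> (transpose L *v x) = x \<bullet> (L *v x)"
    by (metis dot_lmul_matrix inner_commute transpose_matrix_vector)
  moreover have "0 \<le> x \<bullet> (L *v x) + x \<bullet> (transpose L *v x)"
    using assms unfolding psd_mat_def
    by (simp add: matrix_vector_mult_add_rdistrib inner_add_right del: transpose_matrix_vector)
  ultimately show ?thesis by simp
qed

lemma generalized_eigenvalue_bounds:
  fixes S T :: "real^'n^'n"
  assumes "S *v x = lam *\<^sub>R (T *v x)" and "0 < x \<bullet> (T *v x)"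
    and "c * (x \<bullet> (T *v x)) \<le> x \<bullet> (S *v x)" and "x \<bullet> (S *v x) \<le> C * (x \<bullet> (T *v x))"
  shows "c \<le> lam \<and> lam \<le> C"
  using assms by (simp add: mult_le_cancel_right_pos)

lemma pencil_coordinate_bounds:
  fixes a b p :: real
  assumes "p = 0 \<or> p = 1"
  shows "(1 - p/2) * (a + b)\<^sup>2 \<le> 2 * (a\<^sup>2 + b\<^sup>2 - p/2 * (a - b)\<^sup>2)"
    and "a\<^sup>2 + b\<^sup>2 - p/2 * (a - b)\<^sup>2 + 4 * (a * b) \<le> 3 * ((1 - p/2) * (a + b)\<^sup>2)"
    and "a * b + b\<^sup>2 / 2 \<le> (1 - p/2) * (a + b)\<^sup>2"
  using assms zero_le_power2[of "a - b"] zero_le_power2[of "a + b"] zero_le_power2[of "a + b/2"]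
  by (auto simp: power2_eq_square algebra_simps)

lemma pencil_sum_bounds:
  fixes a b mu p :: "'i::finite \<Rightarrow> real"
  assumes mu: "\<forall>i. mu i > 0" and p: "\<forall>i. p i = 0 \<or> p i = 1"
    and cross: "0 \<le> (\<Sum>i\<in>UNIV. a i * b i / mu i)" and b: "0 < (\<Sum>i\<in>UNIV. (b i)\<^sup>2 / mu i)"
  defines "T \<equiv> \<Sum>i\<in>UNIV. ((a i)\<^sup>2 + (b i)\<^sup>2 - p i / 2 * (a i - b i)\<^sup>2) / mu i"
    and "R \<equiv> \<Sum>i\<in>UNIV. (1 - p i / 2) * (a i + b i)\<^sup>2 / mu i"
  shows "0 < R" "(1/2) * R \<le> T" "T \<le> 3 * R"
proof -
  have mu_nonneg: "0 \<le> mu i" for i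
    using mu by (simp add: less_imp_le)
  note bounds = pencil_coordinate_bounds[OF p[rule_format], THEN divide_right_mono, OF mu_nonneg]
  have "(\<Sum>i\<in>UNIV. (a i * b i + (b i)\<^sup>2 / 2) / mu i) \<le> R"
    unfolding R_def by (intro sum_mono bounds(3))
  moreover have "(\<Sum>i\<in>UNIV. (a i * b i + (b i)\<^sup>2 / 2) / mu i)
      = (\<Sum>i\<in>UNIV. a i * b i / mu i) + (\<Sum>i\<in>UNIV. (b i)\<^sup>2 / mu i) / 2"
    by (simp add: add_divide_distrib sum.distrib sum_divide_distrib mult.commute)
  ultimately show "0 < R" using cross b by linarith
  have "R \<le> 2 * T"
    unfolding R_def T_def sum_distrib_left times_divide_eq_right by (intro sum_mono bounds(1))
  then show "(1/2) * R \<le> T" by simp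
  have "T + 4 * (\<Sum>i\<in>UNIV. a i * b i / mu i) \<le> 3 * R"
    unfolding R_def T_def sum_distrib_left sum.distrib[symmetric] times_divide_eq_right
      add_divide_distrib[symmetric]
    by (intro sum_mono bounds(2))
  with cross show "T \<le> 3 * R" by linarith
qed

definition schur_mat ::
    "real \<Rightarrow> real \<Rightarrow> real \<Rightarrow> real^'n^'n \<Rightarrow> real^'n^'n \<Rightarrow> real^'n^'n \<Rightarrow> real^'n^'n" where
  "schur_mat nu au ay M L P =
     nu *\<^sub>R (L ** matrix_inv M ** transpose L) + M
     - (1 / (ay\<^sup>2 * nu + au\<^sup>2)) *\<^sub>R
       (((ay * nu) *\<^sub>R (L ** matrix_inv M) - au *\<^sub>R mat 1) ** P ** M ** P
       ** transpose ((ay * nu) *\<^sub>R (L ** matrix_inv M) - au *\<^sub>R mat 1))"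

definition schur_approx_mat ::
    "real \<Rightarrow> real \<Rightarrow> real \<Rightarrow> real^'n^'n \<Rightarrow> real^'n^'n \<Rightarrow> real^'n^'n \<Rightarrow> real^'n^'n" where
  "schur_approx_mat nu g1 g2 M L P =
     (let L1 = sqrt nu *\<^sub>R (L ** diag_sqrt (mat 1 - g1 *\<^sub>R P)) + diag_sqrt (mat 1 - g2 *\<^sub>R P) ** M
      in L1 ** matrix_inv M ** transpose L1)"

lemma inner_schur_mat:
  fixes M L P :: "real^'n^'n" and nu au ay :: real and x :: "real^'n"
  assumes M: "diagonal_mat M" "\<forall>i. M $ i $ i > 0" and P: "diagonal_mat P" and nu: "0 \<le> nu"
  defines "a \<equiv> sqrt nu *\<^sub>R (transpose L *v x)" and "b \<equiv> M *v x"
  shows "x \<bullet> (schur_mat nu au ay M L P *v x)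
    = (\<Sum>i\<in>UNIV. ((a $ i)\<^sup>2 + (b $ i)\<^sup>2
        - (P $ i $ i)\<^sup>2 * (ay * sqrt nu * a $ i - au * b $ i)\<^sup>2 / (ay\<^sup>2 * nu + au\<^sup>2)) / M $ i $ i)"
proof -
  define Mi where "Mi = matrix_inv M"
  define K where "K = (ay * nu) *\<^sub>R (L ** Mi) - au *\<^sub>R mat 1"
  define c where "c = 1 / (ay\<^sup>2 * nu + au\<^sup>2)"
  define v where "v = transpose L *v x"
  have Mi: "Mi = (\<chi> i j. if i = j then 1 / M $ i $ i else 0)"
    unfolding Mi_def using M by (simp add: matrix_inv_diagonal less_imp_neq[symmetric])
  have dMi: "diagonal_mat Mi"
    unfolding Mi by (rule diagonal_mat_vec_lambda)
  have PMP: "P ** M ** P = (\<chi> i j. if i = j then (P $ i $ i)\<^sup>2 * M $ i $ i else 0)"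
    using P M(1) by (simp add: diagonal_mat_mult diagonal_mat_vec_lambda vec_eq_iff power2_eq_square mult_ac)
  have "transpose K *v x = (ay * nu) *\<^sub>R (Mi *v v) - au *\<^sub>R x"
    unfolding K_def v_def
    by (simp del: transpose_matrix_vector
        add: transpose_diff transpose_scalar matrix_transpose_mul diagonal_mat_transpose dMi
          matrix_vector_mult_diff_rdistrib scaleR_matrix_vector_assoc[symmetric] matrix_vector_mul_assoc[symmetric])
  then have Kx: "(transpose K *v x) $ i = ay * nu * (v $ i / M $ i $ i) - au * x $ i" for i
    by (simp add: diagonal_matrix_vector_mult dMi, simp add: Mi)
  have assoc: "K ** P ** M ** P ** transpose K = K ** (P ** M ** P) ** transpose K"
    by (simp add: matrix_mul_assoc)
  have "x \<bullet> (schur_mat nu au ay M L P *v x)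
      = nu * (v \<bullet> (Mi *v v)) + x \<bullet> (M *v x)
        - c * ((transpose K *v x) \<bullet> ((P ** M ** P) *v (transpose K *v x)))"
    unfolding schur_mat_def Mi_def[symmetric] K_def[symmetric] c_def[symmetric] v_def
    by (simp del: transpose_matrix_vector
        add: matrix_vector_mult_add_rdistrib matrix_vector_mult_diff_rdistrib inner_add_right
          inner_diff_right scaleR_matrix_vector_assoc[symmetric] assoc inner_congruence)
  also have "\<dots> = (\<Sum>i\<in>UNIV. nu * ((v $ i)\<^sup>2 / M $ i $ i) + M $ i $ i * (x $ i)\<^sup>2
        - c * ((P $ i $ i)\<^sup>2 * M $ i $ i * (ay * nu * (v $ i / M $ i $ i) - au * x $ i)\<^sup>2))"
    unfolding inner_diagonal_mat[OF dMi] inner_diagonal_mat[OF M(1)] PMP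
      inner_diagonal_mat[OF diagonal_mat_vec_lambda] Kx
    by (simp add: Mi sum_distrib_left sum_subtractf sum.distrib)
  also have "\<dots> = (\<Sum>i\<in>UNIV. ((a $ i)\<^sup>2 + (b $ i)\<^sup>2
        - (P $ i $ i)\<^sup>2 * (ay * sqrt nu * a $ i - au * b $ i)\<^sup>2 / (ay\<^sup>2 * nu + au\<^sup>2)) / M $ i $ i)"
  proof (rule sum.cong)
    fix i
    define s where "s = sqrt nu"
    have "M $ i $ i \<noteq> 0"
      using M(2) by (simp add: less_imp_neq[symmetric])
    moreover have nu_eq: "nu = s * s"
      using nu unfolding s_def by simp
    moreover have "y / (ay\<^sup>2 * nu + au\<^sup>2) = c * y" for y
      unfolding c_def by simp
    ultimately show "nu * ((v $ i)\<^sup>2 / M $ i $ i) + M $ i $ i * (x $ i)\<^sup>2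
        - c * ((P $ i $ i)\<^sup>2 * M $ i $ i * (ay * nu * (v $ i / M $ i $ i) - au * x $ i)\<^sup>2)
      = ((a $ i)\<^sup>2 + (b $ i)\<^sup>2
        - (P $ i $ i)\<^sup>2 * (ay * sqrt nu * a $ i - au * b $ i)\<^sup>2 / (ay\<^sup>2 * nu + au\<^sup>2)) / M $ i $ i"
      unfolding a_def b_def v_def[symmetric] s_def[symmetric]
      by (simp add: diagonal_matrix_vector_mult M(1) field_simps power2_eq_square)
  qed simp
  finally show ?thesis .
qed

lemma inner_schur_approx_mat:
  fixes M L P :: "real^'n^'n" and nu :: real and x :: "real^'n"
  assumes M: "diagonal_mat M" "\<forall>i. M $ i $ i > 0"
  defines "a \<equiv> sqrt nu *\<^sub>R (transpose L *v x)" and "b \<equiv> M *v x"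
  shows "x \<bullet> (schur_approx_mat nu g1 g2 M L P *v x)
    = (\<Sum>i\<in>UNIV. (sqrt (1 - g1 * P $ i $ i) * a $ i + sqrt (1 - g2 * P $ i $ i) * b $ i)\<^sup>2 / M $ i $ i)"
proof -
  define Q1 Q2 where "Q1 = diag_sqrt (mat 1 - g1 *\<^sub>R P)" and "Q2 = diag_sqrt (mat 1 - g2 *\<^sub>R P)"
  define L1 where "L1 = sqrt nu *\<^sub>R (L ** Q1) + Q2 ** M"
  have Qdiag: "diagonal_mat Q1" "diagonal_mat Q2"
    unfolding Q1_def Q2_def by (simp_all add: diagonal_mat_diag_sqrt)
  have Q1i: "Q1 $ i $ i = sqrt (1 - g1 * P $ i $ i)" and Q2i: "Q2 $ i $ i = sqrt (1 - g2 * P $ i $ i)" for i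
    unfolding Q1_def Q2_def diag_sqrt_diag by (simp_all add: mat_def)
  have "transpose L1 *v x = sqrt nu *\<^sub>R (Q1 *v (transpose L *v x)) + M *v (Q2 *v x)"
    unfolding L1_def
    by (simp del: transpose_matrix_vector
        add: transpose_add transpose_scalar matrix_transpose_mul diagonal_mat_transpose Qdiag M(1)
          matrix_vector_mult_add_rdistrib scaleR_matrix_vector_assoc matrix_vector_mul_assoc)
  then have L1x: "(transpose L1 *v x) $ i = Q1 $ i $ i * a $ i + Q2 $ i $ i * b $ i" for i
    unfolding a_def b_def by (simp add: diagonal_matrix_vector_mult Qdiag M(1) del: transpose_matrix_vector)
  have inv: "matrix_inv M = (\<chi> i j. if i = j then 1 / M $ i $ i else 0)"
    using M by (simp add: matrix_inv_diagonal less_imp_neq[symmetric])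
  have "x \<bullet> (schur_approx_mat nu g1 g2 M L P *v x)
      = (transpose L1 *v x) \<bullet> (matrix_inv M *v (transpose L1 *v x))"
    unfolding schur_approx_mat_def Let_def L1_def[symmetric] Q1_def[symmetric] Q2_def[symmetric]
    by (rule inner_congruence)
  also have "\<dots> = (\<Sum>i\<in>UNIV. ((transpose L1 *v x) $ i)\<^sup>2 / M $ i $ i)"
    unfolding inv inner_diagonal_mat[OF diagonal_mat_vec_lambda] by simp
  finally show ?thesis
    unfolding L1x Q1i Q2i .
qed

lemma sum_cross_term_nonneg:
  fixes M L :: "real^'n^'n" and x :: "real^'n"
  assumes "psd_mat (L + transpose L)" "diagonal_mat M" "\<forall>i. M $ i $ i > 0" "0 \<le> nu"
  shows "0 \<le> (\<Sum>i\<in>UNIV. (sqrt nu *\<^sub>R (transpose L *v x)) $ i * (M *v x) $ i / M $ i $ i)"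
proof -
  have "(\<Sum>i\<in>UNIV. (sqrt nu *\<^sub>R (transpose L *v x)) $ i * (M *v x) $ i / M $ i $ i)
      = sqrt nu * ((transpose L *v x) \<bullet> x)"
    using assms(3) by (simp add: diagonal_matrix_vector_mult assms(2) inner_vec_def sum_distrib_left
        less_imp_neq[symmetric] del: transpose_matrix_vector)
  also have "(transpose L *v x) \<bullet> x = x \<bullet> (L *v x)"
    by (simp add: dot_lmul_matrix)
  finally show ?thesis
    using psd_mat_add_transposeD[OF assms(1), of x] assms(4) by simp
qed

lemma sum_diagonal_quadratic_pos:
  fixes M :: "real^'n^'n" and x :: "real^'n"
  assumes "diagonal_mat M" "\<forall>i. M $ i $ i > 0" "x \<noteq> 0"
  shows "0 < (\<Sum>i\<in>UNIV. ((M *v x) $ i)\<^sup>2 / M $ i $ i)"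
proof -
  obtain j where "x $ j \<noteq> 0"
    using assms(3) by (metis vec_eq_iff zero_index)
  moreover have "((M *v x) $ i)\<^sup>2 / M $ i $ i = M $ i $ i * (x $ i)\<^sup>2" for i
    using assms(2) by (simp add: diagonal_matrix_vector_mult assms(1) power2_eq_square less_imp_neq[symmetric])
  ultimately show ?thesis
    using assms(2) by (intro sum_pos2[of UNIV j]) (simp_all add: less_imp_le)
qed

lemma balanced_weights:
  fixes nu au ay :: real
  assumes "0 < nu" "0 \<le> au" "0 \<le> ay" "au\<^sup>2 / (ay\<^sup>2 * nu + au\<^sup>2) = 1/2"
  shows "au \<noteq> 0" and "ay\<^sup>2 * nu + au\<^sup>2 = 2 * au\<^sup>2" and "ay * sqrt nu = au"
proof -
  show "au \<noteq> 0" and D: "ay\<^sup>2 * nu + au\<^sup>2 = 2 * au\<^sup>2"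
    using assms(4) by (auto simp: field_simps split: if_splits)
  then have "(ay * sqrt nu)\<^sup>2 = au\<^sup>2"
    using assms(1) by (simp add: power_mult_distrib)
  then show "ay * sqrt nu = au"
    using assms(1-3) by (simp add: power2_eq_iff_nonneg)
qed

lemma inner_schur_mat_balanced:
  fixes M L P :: "real^'n^'n" and nu au ay :: real and x :: "real^'n"
  assumes M: "diagonal_mat M" "\<forall>i. M $ i $ i > 0"
    and P: "diagonal_mat P" "\<forall>i. P $ i $ i = 0 \<or> P $ i $ i = 1"
    and weights: "0 < nu" "0 \<le> au" "0 \<le> ay" "au\<^sup>2 / (ay\<^sup>2 * nu + au\<^sup>2) = 1/2"
  defines "a \<equiv> sqrt nu *\<^sub>R (transpose L *v x)" and "b \<equiv> M *v x"
  shows "x \<bullet> (schur_mat nu au ay M L P *v x)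
    = (\<Sum>i\<in>UNIV. ((a $ i)\<^sup>2 + (b $ i)\<^sup>2 - P $ i $ i / 2 * (a $ i - b $ i)\<^sup>2) / M $ i $ i)"
  unfolding inner_schur_mat[OF M P(1) less_imp_le[OF weights(1)]] a_def[symmetric] b_def[symmetric]
    balanced_weights[OF weights]
proof (intro sum.cong refl)
  fix i
  show "((a $ i)\<^sup>2 + (b $ i)\<^sup>2 - (P $ i $ i)\<^sup>2 * (au * a $ i - au * b $ i)\<^sup>2 / (2 * au\<^sup>2)) / M $ i $ i
      = ((a $ i)\<^sup>2 + (b $ i)\<^sup>2 - P $ i $ i / 2 * (a $ i - b $ i)\<^sup>2) / M $ i $ i"
    using P(2)[rule_format, of i] M(2)[rule_format, of i] balanced_weights(1)[OF weights]
    by (elim disjE) (simp_all add: power2_eq_square field_simps)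
qed

lemma inner_schur_approx_mat_half:
  fixes M L P :: "real^'n^'n" and nu :: real and x :: "real^'n"
  assumes M: "diagonal_mat M" "\<forall>i. M $ i $ i > 0" and P: "\<forall>i. P $ i $ i = 0 \<or> P $ i $ i = 1"
  defines "a \<equiv> sqrt nu *\<^sub>R (transpose L *v x)" and "b \<equiv> M *v x"
  shows "x \<bullet> (schur_approx_mat nu (1/2) (1/2) M L P *v x)
    = (\<Sum>i\<in>UNIV. (1 - P $ i $ i / 2) * (a $ i + b $ i)\<^sup>2 / M $ i $ i)"
  unfolding inner_schur_approx_mat[OF M] a_def[symmetric] b_def[symmetric]
proof (intro sum.cong refl)
  fix i
  have "(sqrt (1 - 1/2 * P $ i $ i))\<^sup>2 = 1 - P $ i $ i / 2"
    using P[rule_format, of i] by auto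
  then show "(sqrt (1 - 1/2 * P $ i $ i) * a $ i + sqrt (1 - 1/2 * P $ i $ i) * b $ i)\<^sup>2 / M $ i $ i
      = (1 - P $ i $ i / 2) * (a $ i + b $ i)\<^sup>2 / M $ i $ i"
    by (simp only: distrib_left[symmetric] power_mult_distrib)
qed

theorem proposition4p6:
  fixes nu au ay lam :: real
    and S Shat L1 :: "real^'n^'n"
    and M L P :: "real^'n^'n"
    and x :: "real^'n"
  assumes "nu > 0" and "au \<ge> 0" and "ay \<ge> 0" and "max au ay > 0"
    and "diagonal_mat M" and "\<forall>i. M $ i $ i > 0"
    and "psd_mat (L + transpose L)"
    and "diagonal_mat P" and "\<forall>i. P $ i $ i = 0 \<or> P $ i $ i = 1"
    and "ay\<^sup>2 * nu / (ay\<^sup>2 * nu + au\<^sup>2) = 1/2"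
    and "au\<^sup>2 / (ay\<^sup>2 * nu + au\<^sup>2) = 1/2"
    and "x \<noteq> 0"
    and "S *v x = lam *\<^sub>R (Shat *v x)"
    and "S = nu *\<^sub>R (L ** matrix_inv M ** transpose L) + M
           - (1 / (ay\<^sup>2 * nu + au\<^sup>2)) *\<^sub>R
             (((ay * nu) *\<^sub>R (L ** matrix_inv M) - au *\<^sub>R mat 1) ** P ** M ** P
             ** transpose ((ay * nu) *\<^sub>R (L ** matrix_inv M) - au *\<^sub>R mat 1))"
    and "L1 = sqrt nu *\<^sub>R (L ** diag_sqrt (mat 1 - (ay\<^sup>2 * nu / (ay\<^sup>2 * nu + au\<^sup>2)) *\<^sub>R P))
           + diag_sqrt (mat 1 - (au\<^sup>2 / (ay\<^sup>2 * nu + au\<^sup>2)) *\<^sub>R P) ** M"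
    and "Shat = L1 ** matrix_inv M ** transpose L1"
  shows "1/2 \<le> lam \<and> lam \<le> 3"
proof -
  have S: "S = schur_mat nu au ay M L P"
    using assms(14) by (simp add: schur_mat_def)
  have Shat: "Shat = schur_approx_mat nu (1/2) (1/2) M L P"
    unfolding assms(16,15,10,11) schur_approx_mat_def Let_def ..
  define a b where "a = sqrt nu *\<^sub>R (transpose L *v x)" and "b = M *v x"
  have "0 \<le> (\<Sum>i\<in>UNIV. a $ i * b $ i / M $ i $ i)"
    unfolding a_def b_def using assms(1) by (intro sum_cross_term_nonneg assms(5-7)) simp
  moreover have "0 < (\<Sum>i\<in>UNIV. (b $ i)\<^sup>2 / M $ i $ i)"
    unfolding b_def using assms(5,6,12) by (rule sum_diagonal_quadratic_pos)
  ultimately have "0 < x \<bullet> (Shat *v x)"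
    and "1/2 * (x \<bullet> (Shat *v x)) \<le> x \<bullet> (S *v x)" and "x \<bullet> (S *v x) \<le> 3 * (x \<bullet> (Shat *v x))"
    unfolding S Shat inner_schur_mat_balanced[OF assms(5,6,8,9,1-3,11)]
      inner_schur_approx_mat_half[OF assms(5,6,9)] a_def[symmetric] b_def[symmetric]
    using pencil_sum_bounds[of "\<lambda>i. M $ i $ i" "\<lambda>i. P $ i $ i" "\<lambda>i. a $ i" "\<lambda>i. b $ i"] assms(6,9)
    by auto
  then show ?thesis
    by (rule generalized_eigenvalue_bounds[OF assms(13)])
qed

end
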